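(* Let $f\colon\mathbb R\to\mathbb R$ be continuous with $|f(x)|\leqslant a\cosh(bx)$ for all $x$, for some $a>0$, $b\in\mathbb R$. Fix $\lambda>0$ and $P_n=e^{-\lambda}\lambda^n/n!$. For a continuous function $u\colon\mathbb R\to\mathbb R$, a compactly supported Borel probability measure $\rho$ and $x\in\mathbb R$, define, with $h^u_k\colon y\mapsto u(y)/k$, $$\sigma^{u,\rho}_x=\sum_{n=0}^\infty P_n\,(h^u_{n+1})_\star\big(\delta_x*\rho^{*n}\big),\qquad\sigma^{u,\rho}=\sum_{n=0}^\infty P_n\,(h^u_{n+1})_\star\big(\rho^{*(n+1)}\big),$$ and $\langle\sigma,y\rangle=\int y\,d\sigma(y)$. Then for every compactly supported probability measure $\rho$ there exists a sequence $k\mapsto(I_k,p_k)$ of closed intervals $I_k$ and real trigonometric polynomials $p_k$, with $p_k$ approximating $f$ on $I_k$ (i.e. $\sup_{x\in I_k}|f(x)-p_k(x)|\to0$), such that: $\sigma^{p_k,\rho}_x\to\sigma^{f,\rho}_x$ for every $x\in\operatorname{supp}\rho$ and $\sigma^{p_k,\rho}\to\sigma^{f,\rho}$, in the sense of convergence against every continuous compactly supported test function; $\langle\sigma^{p_k,\rho}_x,y\rangle\to\langle\sigma^{f,\rho}_x,y\rangle$ uniformly in $x\in\operatorname{supp}\rho$; and $\langle\sigma^{p_k,\rho},y\rangle\to\langle\sigma^{f,\rho},y\rangle$ as a sequence of numbers.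
   Context: A real trigonometric polynomial of period $T>0$ is a real-valued function of the form $p(x)=\sum_{k=-n}^n c_ke^{2\pi ikx/T}$ with $c_k\in\mathbb C$. $(h)_\star$ denotes pushforward of measures, $*$ convolution, $\rho^{*0}=\delta_0$, and $\delta_a$ the Dirac measure at $a$. *)

theory Defs
  imports "HOL-Probability.Probability" "HOL-Probability.Convolution"
begin

definition real_trig_poly :: "(real \<Rightarrow> real) \<Rightarrow> bool" where
  "real_trig_poly p \<longleftrightarrow> (\<exists>T>0. \<exists>n::nat. \<exists>c::int \<Rightarrow> complex.
     \<forall>x. complex_of_real (p x) =
          (\<Sum>k\<in>{-int n..int n}. c k * exp (2 * pi * \<i> * of_int k * of_real x / of_real T)))"

definition msupp :: "real measure \<Rightarrow> real set" where
  "msupp \<rho> = {x. \<forall>e>0. emeasure \<rho> (ball x e) > 0}"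

definition compactly_supported_prob :: "real measure \<Rightarrow> bool" where
  "compactly_supported_prob \<rho> \<longleftrightarrow>
     prob_space \<rho> \<and> sets \<rho> = sets borel \<and> compact (msupp \<rho>)"

fun conv_pow :: "real measure \<Rightarrow> nat \<Rightarrow> real measure" where
  "conv_pow \<rho> 0 = return borel 0"
| "conv_pow \<rho> (Suc n) = convolution \<rho> (conv_pow \<rho> n)"

definition poisson_weight :: "real \<Rightarrow> nat \<Rightarrow> real" where
  "poisson_weight lam n = exp (- lam) * lam ^ n / fact n"

definition measure_series :: "(nat \<Rightarrow> real) \<Rightarrow> (nat \<Rightarrow> real measure) \<Rightarrow> real measure" where
  "measure_series w \<mu> = measure_of UNIV (sets borel)
     (\<lambda>A. \<Sum>n. ennreal (w n) * emeasure (\<mu> n) A)"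

definition hfun :: "(real \<Rightarrow> real) \<Rightarrow> nat \<Rightarrow> real \<Rightarrow> real" where
  "hfun u k y = u y / real k"

definition sigma_x :: "real \<Rightarrow> (real \<Rightarrow> real) \<Rightarrow> real measure \<Rightarrow> real \<Rightarrow> real measure" where
  "sigma_x lam u \<rho> x = measure_series (poisson_weight lam)
     (\<lambda>n. distr (convolution (return borel x) (conv_pow \<rho> n)) borel (hfun u (n + 1)))"

definition sigma :: "real \<Rightarrow> (real \<Rightarrow> real) \<Rightarrow> real measure \<Rightarrow> real measure" where
  "sigma lam u \<rho> = measure_series (poisson_weight lam)
     (\<lambda>n. distr (conv_pow \<rho> (n + 1)) borel (hfun u (n + 1)))"

definition vague_conv :: "(nat \<Rightarrow> real measure) \<Rightarrow> real measure \<Rightarrow> bool" where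
  "vague_conv \<mu>s \<mu> \<longleftrightarrow> (\<forall>g :: real \<Rightarrow> real. continuous_on UNIV g \<and> compact (closure {y. g y \<noteq> 0}) \<longrightarrow>
      (\<lambda>k. integral\<^sup>L (\<mu>s k) g) \<longlonglongrightarrow> integral\<^sup>L \<mu> g)"

end

theory Submission
  imports Defs
begin

(* For each k, the map h z = arcsin (Im z) / s with s = pi / (2 (k + 1)) inverts y |-> cis (s y)
   on [-(k + 1), k + 1], so f o h is continuous on the unit circle.  A Stone-Weierstrass polynomial
   approximating it, read along z = cis (s y), is a trigonometric polynomial p_k with
   |f - p_k| < 1/(k + 1) on [-k, k] and |p_k y| <= a cosh (b (|y| + 1)) + 1.

   If rho lives in [-R, R], then delta_x * rho^{*n} lives in [-(n + 1) R, (n + 1) R] for x in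
   supp rho, and the integral of phi against sigma^{u,rho}_x is the series over n of
   P_n times the integral of phi (u y / (n + 1)) against delta_x * rho^{*n}.  For continuous phi with
   |phi t| <= A |t| + B, each term converges uniformly in x as u = p_k -> f (uniform convergence
   on compacts), and all terms are dominated by P_n (A a cosh (b ((n + 1) R + 1)) + A + B), which
   is summable; a uniform version of Tannery's theorem then passes to the limit under the sum.
   Compactly supported test functions and the identity are such phi. *)

section \<open>Integrals against weighted series of measures\<close>

lemma sets_measure_series [simp, measurable_cong]: "sets (measure_series w \<nu>) = sets borel"
  using sets.sigma_sets_eq[of borel] by (simp add: measure_series_def)

lemma measure_series_eq_bind:
  fixes \<nu> :: "nat \<Rightarrow> real measure"
  assumes w: "\<And>n. w n \<ge> 0"
    and \<nu>: "\<And>n. subprob_space (\<nu> n)" "\<And>n. sets (\<nu> n) = sets borel"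
  shows "measure_series w \<nu> = density (count_space UNIV) (\<lambda>n. ennreal (w n)) \<bind> \<nu>"
proof -
  let ?N = "density (count_space UNIV) (\<lambda>n. ennreal (w n))"
  let ?B = "?N \<bind> \<nu>"
  have meas: "\<nu> \<in> measurable ?N (subprob_algebra borel)"
    using \<nu> by (auto simp: space_subprob_algebra)
  have sB: "sets ?B = sets borel"
    using sets_bind[of ?N \<nu> borel] \<nu> by simp
  have "measure_series w \<nu> = measure_of UNIV (sets borel) (emeasure ?B)"
    unfolding measure_series_def
  proof (rule measure_of_eq)
    fix A :: "real set" assume "A \<in> sigma_sets UNIV (sets borel)"
    then have A: "A \<in> sets borel"
      by (metis sets.sigma_sets_eq space_borel)
    have "emeasure ?B A = (\<integral>\<^sup>+n. emeasure (\<nu> n) A \<partial>?N)"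
      by (rule emeasure_bind[OF _ meas A]) simp
    also have "\<dots> = (\<Sum>n. ennreal (w n) * emeasure (\<nu> n) A)"
      by (simp add: nn_integral_density nn_integral_count_space_nat)
    finally show "(\<Sum>n. ennreal (w n) * emeasure (\<nu> n) A) = emeasure ?B A" by simp
  qed simp
  also have "\<dots> = ?B"
    using measure_of_of_measure[of ?B] sB sets_eq_imp_space_eq[OF sB] by simp
  finally show ?thesis .
qed

lemma nn_integral_measure_series:
  fixes \<nu> :: "nat \<Rightarrow> real measure"
  assumes w: "\<And>n. w n \<ge> 0"
    and \<nu>: "\<And>n. subprob_space (\<nu> n)" "\<And>n. sets (\<nu> n) = sets borel"
    and g: "g \<in> borel_measurable borel"
  shows "(\<integral>\<^sup>+y. g y \<partial>measure_series w \<nu>) = (\<Sum>n. ennreal (w n) * (\<integral>\<^sup>+y. g y \<partial>\<nu> n))"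
proof -
  let ?N = "density (count_space UNIV) (\<lambda>n. ennreal (w n))"
  have "\<nu> \<in> measurable ?N (subprob_algebra borel)"
    using \<nu> by (auto simp: space_subprob_algebra)
  then have "(\<integral>\<^sup>+y. g y \<partial>(?N \<bind> \<nu>)) = (\<integral>\<^sup>+n. \<integral>\<^sup>+y. g y \<partial>\<nu> n \<partial>?N)"
    by (rule nn_integral_bind[OF g])
  also have "\<dots> = (\<Sum>n. ennreal (w n) * (\<integral>\<^sup>+y. g y \<partial>\<nu> n))"
    by (simp add: nn_integral_density nn_integral_count_space_nat)
  finally show ?thesis
    using measure_series_eq_bind[OF w \<nu>] by simp
qed

context prob_space
begin

lemma abs_integral_le_AE:
  fixes g :: "'a \<Rightarrow> real"
  assumes "g \<in> borel_measurable M" "AE y in M. \<bar>g y\<bar> \<le> c"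
  shows "\<bar>integral\<^sup>L M g\<bar> \<le> c"
proof -
  have "integrable M g"
    using assms by (intro integrable_const_bound[where B=c]) auto
  have "\<bar>integral\<^sup>L M g\<bar> \<le> integral\<^sup>L M (\<lambda>y. \<bar>g y\<bar>)"
    using integral_norm_bound[of M g] by simp
  also have "\<dots> \<le> integral\<^sup>L M (\<lambda>_. c)"
    by (rule integral_mono_AE) (use \<open>integrable M g\<close> assms(2) in auto)
  finally show ?thesis
    by (simp add: prob_space)
qed

end

lemma integral_measure_series_nonneg:
  fixes \<nu> :: "nat \<Rightarrow> real measure" and \<psi> :: "real \<Rightarrow> real"
  assumes w: "\<And>n. w n \<ge> 0"
    and \<nu>: "\<And>n. prob_space (\<nu> n)" "\<And>n. sets (\<nu> n) = sets borel"
    and \<psi>: "\<psi> \<in> borel_measurable borel" "\<And>y. \<psi> y \<ge> 0"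
    and bound: "\<And>n. AE y in \<nu> n. \<psi> y \<le> c n" and c: "summable (\<lambda>n. w n * c n)"
  shows "integrable (measure_series w \<nu>) \<psi>"
    and "summable (\<lambda>n. w n * integral\<^sup>L (\<nu> n) \<psi>)"
    and "integral\<^sup>L (measure_series w \<nu>) \<psi> = (\<Sum>n. w n * integral\<^sup>L (\<nu> n) \<psi>)"
proof -
  interpret \<nu>: prob_space "\<nu> n" for n by (rule \<nu>)
  have \<psi>\<nu>: "\<psi> \<in> borel_measurable (\<nu> n)" for n
    using \<psi>(1) measurable_cong_sets[OF \<nu>(2) refl] by blast
  have int: "integrable (\<nu> n) \<psi>" for n
    using bound[of n] \<psi> \<psi>\<nu> by (intro \<nu>.integrable_const_bound[where B="c n"]) (auto elim!: AE_mp)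
  have I0: "integral\<^sup>L (\<nu> n) \<psi> \<ge> 0" for n
    using \<psi>(2) by simp
  have Ic: "integral\<^sup>L (\<nu> n) \<psi> \<le> c n" for n
    using \<nu>.abs_integral_le_AE[where g=\<psi> and c="c n" and n=n] \<psi>\<nu>[of n] bound[of n] \<psi>(2) by (auto elim!: AE_mp)
  show sm: "summable (\<lambda>n. w n * integral\<^sup>L (\<nu> n) \<psi>)"
    by (rule summable_comparison_test[OF _ c]) (use w I0 Ic in \<open>auto intro!: exI[of _ 0] mult_left_mono\<close>)
  have "(\<integral>\<^sup>+y. ennreal (\<psi> y) \<partial>measure_series w \<nu>) =
      (\<Sum>n. ennreal (w n) * (\<integral>\<^sup>+y. ennreal (\<psi> y) \<partial>\<nu> n))"
    using \<nu> measurable_compose[OF \<psi>(1) measurable_ennreal]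
    by (intro nn_integral_measure_series w prob_space_imp_subprob_space) auto
  also have "\<dots> = (\<Sum>n. ennreal (w n * integral\<^sup>L (\<nu> n) \<psi>))"
    using nn_integral_eq_integral[OF int] \<psi>(2) w I0 by (simp add: ennreal_mult)
  also have "\<dots> = ennreal (\<Sum>n. w n * integral\<^sup>L (\<nu> n) \<psi>)"
    by (rule suminf_ennreal2[OF _ sm]) (use w I0 in auto)
  finally have nn: "(\<integral>\<^sup>+y. ennreal (\<psi> y) \<partial>measure_series w \<nu>) =
      ennreal (\<Sum>n. w n * integral\<^sup>L (\<nu> n) \<psi>)" .
  show "integrable (measure_series w \<nu>) \<psi>"
    by (rule integrableI_nonneg) (use \<psi> nn in auto)
  have "(\<Sum>n. w n * integral\<^sup>L (\<nu> n) \<psi>) \<ge> 0"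
    by (rule suminf_nonneg[OF sm]) (use w I0 in auto)
  then show "integral\<^sup>L (measure_series w \<nu>) \<psi> = (\<Sum>n. w n * integral\<^sup>L (\<nu> n) \<psi>)"
    by (subst integral_eq_nn_integral) (use \<psi> nn in auto)
qed

lemma integral_measure_series:
  fixes \<nu> :: "nat \<Rightarrow> real measure" and \<phi> :: "real \<Rightarrow> real"
  assumes w: "\<And>n. w n \<ge> 0"
    and \<nu>: "\<And>n. prob_space (\<nu> n)" "\<And>n. sets (\<nu> n) = sets borel"
    and \<phi>: "\<phi> \<in> borel_measurable borel"
    and bound: "\<And>n. AE y in \<nu> n. \<bar>\<phi> y\<bar> \<le> c n" and c: "summable (\<lambda>n. w n * c n)"
  shows "integral\<^sup>L (measure_series w \<nu>) \<phi> = (\<Sum>n. w n * integral\<^sup>L (\<nu> n) \<phi>)"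
proof -
  interpret \<nu>: prob_space "\<nu> n" for n by (rule \<nu>)
  define P where "P = (\<lambda>y. max 0 (\<phi> y))"
  define N where "N = (\<lambda>y. max 0 (- \<phi> y))"
  have c0: "c n \<ge> 0" for n
  proof -
    have "AE y in \<nu> n. c n \<ge> 0"
      using bound[of n] by eventually_elim auto
    then show ?thesis by simp
  qed
  have \<phi>_eq: "\<phi> = (\<lambda>y. P y - N y)"
    by (auto simp: P_def N_def)
  have PN0: "\<And>y. P y \<ge> 0" "\<And>y. N y \<ge> 0"
    by (simp_all add: P_def N_def)
  have PN: "P \<in> borel_measurable borel" "N \<in> borel_measurable borel"
    using \<phi> by (simp_all add: P_def N_def)
  have PNc: "AE y in \<nu> n. P y \<le> c n" "AE y in \<nu> n. N y \<le> c n" for n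
    using bound[of n] c0[of n] unfolding P_def N_def by (auto elim!: AE_mp)
  note P = integral_measure_series_nonneg[OF w \<nu> PN(1) PN0(1) PNc(1) c]
    and N = integral_measure_series_nonneg[OF w \<nu> PN(2) PN0(2) PNc(2) c]
  have "integrable (\<nu> n) P" "integrable (\<nu> n) N" for n
    using PNc[of n] PN0 PN
    by (auto simp: measurable_cong_sets[OF \<nu>(2) refl] intro!: \<nu>.integrable_const_bound[where B="c n"] elim!: AE_mp)
  then have "w n * integral\<^sup>L (\<nu> n) \<phi> = w n * integral\<^sup>L (\<nu> n) P - w n * integral\<^sup>L (\<nu> n) N" for n
    unfolding \<phi>_eq by (simp add: right_diff_distrib)
  then have "(\<Sum>n. w n * integral\<^sup>L (\<nu> n) \<phi>) =
      (\<Sum>n. w n * integral\<^sup>L (\<nu> n) P) - (\<Sum>n. w n * integral\<^sup>L (\<nu> n) N)"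
    using suminf_diff[OF P(2) N(2)] by simp
  also have "\<dots> = integral\<^sup>L (measure_series w \<nu>) \<phi>"
    unfolding \<phi>_eq P(3)[symmetric] N(3)[symmetric] using P(1) N(1) by simp
  finally show ?thesis ..
qed

section \<open>Uniform convergence of series and integrals\<close>

lemma uniform_limit_sum:
  fixes a :: "'i \<Rightarrow> 'k \<Rightarrow> 'x \<Rightarrow> 'b::real_normed_vector"
  assumes "\<And>n. n \<in> I \<Longrightarrow> uniform_limit X (\<lambda>k. a n k) (b n) F"
  shows "uniform_limit X (\<lambda>k x. \<Sum>n\<in>I. a n k x) (\<lambda>x. \<Sum>n\<in>I. b n x) F"
  using assms
proof (induction I rule: infinite_finite_induct)
  case (insert n I)
  then show ?case
    by (simp add: uniform_limit_add)
qed (auto intro: uniform_limit_const)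

lemma uniform_limit_suminf_dominated:
  fixes a :: "nat \<Rightarrow> nat \<Rightarrow> 'x \<Rightarrow> real"
  assumes lim: "\<And>n. uniform_limit X (\<lambda>k x. a k n x) (b n) sequentially"
    and bound: "\<And>k n x. x \<in> X \<Longrightarrow> \<bar>a k n x\<bar> \<le> M n" "\<And>n x. x \<in> X \<Longrightarrow> \<bar>b n x\<bar> \<le> M n"
    and M: "summable M"
  shows "uniform_limit X (\<lambda>k x. \<Sum>n. a k n x) (\<lambda>x. \<Sum>n. b n x) sequentially"
proof (rule uniform_limitI)
  fix e :: real assume "e > 0"
  then obtain N where N: "\<bar>\<Sum>n. M (n + N)\<bar> < e / 4"
    using suminf_exist_split[OF _ M, of "e / 4"] by force
  have "uniform_limit X (\<lambda>k x. \<Sum>n<N. a k n x) (\<lambda>x. \<Sum>n<N. b n x) sequentially"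
    using lim by (intro uniform_limit_sum)
  then have "\<forall>\<^sub>F k in sequentially. \<forall>x\<in>X. dist (\<Sum>n<N. a k n x) (\<Sum>n<N. b n x) < e / 2"
    using \<open>e > 0\<close> by (intro uniform_limitD) auto
  then show "\<forall>\<^sub>F k in sequentially. \<forall>x\<in>X. dist (\<Sum>n. a k n x) (\<Sum>n. b n x) < e"
  proof eventually_elim
    case (elim k)
    show ?case
    proof
      fix x assume "x \<in> X"
      have sa: "summable (\<lambda>n. a k n x)" and sb: "summable (\<lambda>n. b n x)"
        using bound \<open>x \<in> X\<close> by (auto intro!: summable_comparison_test[OF _ M] exI[of _ 0])
      let ?d = "\<lambda>n. a k n x - b n x"
      have sM: "summable (\<lambda>n. M (n + N))"
        using M by (simp add: summable_iff_shift)
      have dM: "\<bar>?d (n + N)\<bar> \<le> 2 * M (n + N)" for n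
        using bound(1)[of x k "n + N"] bound(2)[of x "n + N"] \<open>x \<in> X\<close> by linarith
      have sdN: "summable (\<lambda>n. \<bar>?d (n + N)\<bar>)"
        using dM by (intro summable_comparison_test[OF _ summable_mult[OF sM, of 2]] exI[of _ 0]) simp
      have "\<bar>\<Sum>n. ?d (n + N)\<bar> \<le> (\<Sum>n. \<bar>?d (n + N)\<bar>)"
        using sdN by (rule summable_rabs)
      also have "\<dots> \<le> (\<Sum>n. 2 * M (n + N))"
        using dM sdN summable_mult[OF sM, of 2] by (rule suminf_le)
      also have "\<dots> = 2 * (\<Sum>n. M (n + N))"
        using sM by (rule suminf_mult)
      also have "\<dots> < e / 2"
        using N by linarith
      finally have tail: "\<bar>\<Sum>n. ?d (n + N)\<bar> < e / 2" .
      have head: "\<bar>\<Sum>n<N. ?d n\<bar> < e / 2"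
        using elim \<open>x \<in> X\<close> by (simp add: dist_real_def sum_subtractf)
      have "(\<Sum>n. a k n x) - (\<Sum>n. b n x) = (\<Sum>n. ?d (n + N)) + (\<Sum>n<N. ?d n)"
        using suminf_diff[OF sa sb] suminf_split_initial_segment[OF summable_diff[OF sa sb], of N]
        by simp
      then show "dist (\<Sum>n. a k n x) (\<Sum>n. b n x) < e"
        using tail head by (simp add: dist_real_def)
    qed
  qed
qed

lemma uniform_limit_integral:
  fixes M :: "'x \<Rightarrow> 'a measure" and g :: "nat \<Rightarrow> 'a \<Rightarrow> real"
  assumes M: "\<And>x. x \<in> X \<Longrightarrow> prob_space (M x)" "\<And>x. x \<in> X \<Longrightarrow> AE y in M x. y \<in> S"
    and meas: "\<And>x k. x \<in> X \<Longrightarrow> g k \<in> borel_measurable (M x)"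
      "\<And>x. x \<in> X \<Longrightarrow> G \<in> borel_measurable (M x)"
    and bound: "\<And>k y. y \<in> S \<Longrightarrow> \<bar>g k y\<bar> \<le> c" "\<And>y. y \<in> S \<Longrightarrow> \<bar>G y\<bar> \<le> c"
    and lim: "uniform_limit S g G sequentially"
  shows "uniform_limit X (\<lambda>k x. integral\<^sup>L (M x) (g k)) (\<lambda>x. integral\<^sup>L (M x) G) sequentially"
proof (rule uniform_limitI)
  fix e :: real assume "e > 0"
  then have "\<forall>\<^sub>F k in sequentially. \<forall>y\<in>S. dist (g k y) (G y) < e / 2"
    using lim by (intro uniform_limitD) auto
  then show "\<forall>\<^sub>F k in sequentially. \<forall>x\<in>X. dist (integral\<^sup>L (M x) (g k)) (integral\<^sup>L (M x) G) < e"
  proof eventually_elim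
    case (elim k)
    show ?case
    proof
      fix x assume "x \<in> X"
      interpret prob_space "M x"
        using M(1) \<open>x \<in> X\<close> .
      have S: "AE y in M x. y \<in> S"
        using M(2) \<open>x \<in> X\<close> .
      have "AE y in M x. \<bar>g k y\<bar> \<le> c" "AE y in M x. \<bar>G y\<bar> \<le> c"
        using S by (auto elim!: eventually_mono intro: bound)
      then have "integrable (M x) (g k)" "integrable (M x) G"
        using meas \<open>x \<in> X\<close> by (auto intro!: integrable_const_bound[where B=c])
      then have "dist (integral\<^sup>L (M x) (g k)) (integral\<^sup>L (M x) G) = \<bar>integral\<^sup>L (M x) (\<lambda>y. g k y - G y)\<bar>"
        by (simp add: dist_real_def)
      also have "\<dots> \<le> e / 2"
      proof (rule abs_integral_le_AE)
        show "(\<lambda>y. g k y - G y) \<in> borel_measurable (M x)"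
          using meas \<open>x \<in> X\<close> by simp
        show "AE y in M x. \<bar>g k y - G y\<bar> \<le> e / 2"
          using S by (rule eventually_mono) (use elim in \<open>auto simp: dist_real_def\<close>)
      qed
      finally show "dist (integral\<^sup>L (M x) (g k)) (integral\<^sup>L (M x) G) < e"
        using \<open>e > 0\<close> by linarith
    qed
  qed
qed

lemma uniform_limit_integral_compose:
  fixes M :: "'x \<Rightarrow> real measure" and p :: "nat \<Rightarrow> real \<Rightarrow> real" and \<psi> :: "real \<Rightarrow> real"
  assumes M: "\<And>x. x \<in> X \<Longrightarrow> prob_space (M x)" "\<And>x. x \<in> X \<Longrightarrow> sets (M x) = sets borel"
      "\<And>x. x \<in> X \<Longrightarrow> AE y in M x. y \<in> S"
    and meas: "f \<in> borel_measurable borel" "\<And>k. p k \<in> borel_measurable borel"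
    and bound: "\<And>y. y \<in> S \<Longrightarrow> \<bar>f y\<bar> \<le> c" "\<And>k y. y \<in> S \<Longrightarrow> \<bar>p k y\<bar> \<le> c"
    and lim: "uniform_limit S p f sequentially"
    and \<psi>: "continuous_on UNIV \<psi>"
  shows "uniform_limit X (\<lambda>k x. integral\<^sup>L (M x) (\<lambda>y. \<psi> (p k y)))
    (\<lambda>x. integral\<^sup>L (M x) (\<lambda>y. \<psi> (f y))) sequentially"
proof -
  have \<psi>_c: "continuous_on {-c..c} \<psi>"
    using \<psi> by (rule continuous_on_subset) simp
  obtain D where D: "\<And>t. t \<in> {-c..c} \<Longrightarrow> \<bar>\<psi> t\<bar> \<le> D"
    using compact_imp_bounded[OF compact_continuous_image[OF \<psi>_c compact_Icc]]
    unfolding bounded_real by blast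
  have in_Icc: "\<forall>\<^sub>F k in sequentially. \<forall>y\<in>S. p k y \<in> {-c..c}"
  proof (intro always_eventually allI ballI)
    fix k y assume "y \<in> S"
    then show "p k y \<in> {-c..c}"
      using bound(2)[of y k] by (simp add: abs_le_iff)
  qed
  have "uniform_limit S (\<lambda>k y. \<psi> (p k y)) (\<lambda>y. \<psi> (f y)) sequentially"
    using compact_uniformly_continuous[OF \<psi>_c compact_Icc] in_Icc
    by (rule uniform_limit_compose_uniformly_continuous_on[OF lim]) simp
  moreover have "(\<lambda>y. \<psi> (u y)) \<in> borel_measurable (M x)"
    if "u \<in> borel_measurable borel" "x \<in> X" for u x
    using measurable_compose[OF that(1) borel_measurable_continuous_onI[OF \<psi>]]
      measurable_cong_sets[OF M(2)[OF that(2)] refl] by blast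
  moreover have "\<bar>\<psi> (p k y)\<bar> \<le> D" "\<bar>\<psi> (f y)\<bar> \<le> D" if "y \<in> S" for k y
    using D[of "p k y"] D[of "f y"] bound(1)[OF that] bound(2)[of y k, OF that] by (simp_all add: abs_le_iff)
  ultimately show ?thesis
    using M(1,3) meas by (intro uniform_limit_integral[where c=D]) auto
qed

section \<open>Convolution powers of compactly supported measures\<close>

lemma convolution_AE_abs_le:
  fixes M N :: "real measure"
  assumes M: "prob_space M" "sets M = sets borel" and N: "prob_space N" "sets N = sets borel"
    and "AE x in M. \<bar>x\<bar> \<le> r" "AE y in N. \<bar>y\<bar> \<le> s"
  shows "prob_space (convolution M N)" "sets (convolution M N) = sets borel"
    "AE z in convolution M N. \<bar>z\<bar> \<le> r + s"
proof -
  interpret pair_prob_space M N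
    using M N by (simp add: pair_prob_space_def pair_sigma_finite_def prob_space_imp_sigma_finite)
  have "(\<lambda>p. fst p + snd p) \<in> measurable (borel \<Otimes>\<^sub>M borel) (borel :: real measure)"
    by measurable
  then have add: "(\<lambda>(x, y). x + y) \<in> measurable (M \<Otimes>\<^sub>M N) (borel :: real measure)"
    by (subst measurable_cong_sets[OF sets_pair_measure_cong[OF M(2) N(2)] refl]) (simp add: case_prod_beta')
  show "prob_space (convolution M N)"
    unfolding convolution_def by (rule prob_space.prob_space_distr[OF P.prob_space_axioms add])
  show "sets (convolution M N) = sets borel"
    unfolding convolution_def by simp
  have "AE p in M \<Otimes>\<^sub>M N. \<bar>fst p + snd p\<bar> \<le> r + s"
  proof (rule AE_pair_measure)
    show "{p \<in> space (M \<Otimes>\<^sub>M N). \<bar>fst p + snd p\<bar> \<le> r + s} \<in> sets (M \<Otimes>\<^sub>M N)"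
      using add by (auto simp: case_prod_beta')
    show "AE x in M. AE y in N. \<bar>fst (x, y) + snd (x, y)\<bar> \<le> r + s"
      using assms(5) by (rule eventually_mono) (use assms(6) in \<open>auto elim!: eventually_mono\<close>)
  qed
  then show "AE z in convolution M N. \<bar>z\<bar> \<le> r + s"
    unfolding convolution_def by (subst AE_distr_iff[OF add]) (auto simp: case_prod_beta')
qed

lemma conv_pow_AE_abs_le:
  assumes "prob_space \<rho>" "sets \<rho> = sets borel" "AE y in \<rho>. \<bar>y\<bar> \<le> R"
  shows "prob_space (conv_pow \<rho> n) \<and> sets (conv_pow \<rho> n) = sets borel \<and>
    (AE y in conv_pow \<rho> n. \<bar>y\<bar> \<le> real n * R)"
proof (induction n)
  case 0
  have "AE y in return borel (0::real). y = 0"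
    by (subst AE_return) auto
  then show ?case
    by (simp only: conv_pow.simps) (simp add: prob_space_return)
next
  case (Suc n)
  then show ?case
    using convolution_AE_abs_le[OF assms(1,2), of "conv_pow \<rho> n" R "real n * R"] assms(3)
    by (simp only: conv_pow.simps) (auto simp: algebra_simps)
qed

lemma AE_in_msupp:
  assumes "sets \<rho> = sets borel"
  shows "AE y in \<rho>. y \<in> msupp \<rho>"
proof -
  let ?F = "{ball x e | x e. e > 0 \<and> emeasure \<rho> (ball x e) = 0}"
  obtain F' where F': "F' \<subseteq> ?F" "countable F'" "\<Union>F' = \<Union>?F"
    using Lindelof[of ?F] by auto
  have "(\<Union>B\<in>F'. B) \<in> null_sets \<rho>"
  proof (rule null_sets_UN')
    fix B assume "B \<in> F'"
    then obtain x e where "B = ball x e" "emeasure \<rho> (ball x e) = 0"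
      using F'(1) by blast
    then show "B \<in> null_sets \<rho>"
      using assms by (simp add: null_sets_def)
  qed fact
  moreover have "{y \<in> space \<rho>. y \<notin> msupp \<rho>} \<subseteq> \<Union>F'"
  proof
    fix y assume "y \<in> {y \<in> space \<rho>. y \<notin> msupp \<rho>}"
    then obtain e where "e > 0" "emeasure \<rho> (ball y e) = 0"
      unfolding msupp_def by (auto simp: not_less)
    then have "y \<in> \<Union>?F"
      by (intro UnionI[of "ball y e"]) auto
    then show "y \<in> \<Union>F'"
      by (simp only: F'(3))
  qed
  ultimately show ?thesis
    by (intro AE_I') simp_all
qed

lemma compactly_supported_probE:
  assumes "compactly_supported_prob \<rho>"
  obtains R where "R \<ge> 0" "\<And>x. x \<in> msupp \<rho> \<Longrightarrow> \<bar>x\<bar> \<le> R" "AE y in \<rho>. \<bar>y\<bar> \<le> R"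
proof -
  have \<rho>: "sets \<rho> = sets borel" "compact (msupp \<rho>)"
    using assms by (auto simp: compactly_supported_prob_def)
  obtain R where R: "\<And>x. x \<in> msupp \<rho> \<Longrightarrow> \<bar>x\<bar> \<le> R"
    using compact_imp_bounded[OF \<rho>(2)] unfolding bounded_real by blast
  have "AE y in \<rho>. \<bar>y\<bar> \<le> max R 0"
    using AE_in_msupp[OF \<rho>(1)] by (rule eventually_mono) (auto dest: R)
  then show ?thesis
    using R by (intro that[of "max R 0"]) (auto simp: le_max_iff_disj)
qed

lemma return_conv_pow_AE_in_Icc:
  assumes "prob_space \<rho>" "sets \<rho> = sets borel" "AE y in \<rho>. \<bar>y\<bar> \<le> R" "\<bar>x\<bar> \<le> R"
  shows "prob_space (convolution (return borel x) (conv_pow \<rho> n))"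
    "sets (convolution (return borel x) (conv_pow \<rho> n)) = sets borel"
    "AE y in convolution (return borel x) (conv_pow \<rho> n). y \<in> {-((real n + 1) * R)..(real n + 1) * R}"
proof -
  have "prob_space (return borel x)"
    by (simp add: prob_space_return)
  moreover have "AE y in return borel x. \<bar>y\<bar> \<le> R"
    using assms(4) by (subst AE_return) auto
  ultimately have conv: "prob_space (convolution (return borel x) (conv_pow \<rho> n))"
    "sets (convolution (return borel x) (conv_pow \<rho> n)) = sets borel"
    "AE y in convolution (return borel x) (conv_pow \<rho> n). \<bar>y\<bar> \<le> R + real n * R"
    using convolution_AE_abs_le[of "return borel x" "conv_pow \<rho> n" R "real n * R"]
      conv_pow_AE_abs_le[OF assms(1-3), of n] by simp_all
  show "prob_space (convolution (return borel x) (conv_pow \<rho> n))"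
    "sets (convolution (return borel x) (conv_pow \<rho> n)) = sets borel"
    using conv(1,2) .
  show "AE y in convolution (return borel x) (conv_pow \<rho> n). y \<in> {-((real n + 1) * R)..(real n + 1) * R}"
    using conv(3) by (rule eventually_mono) (simp add: algebra_simps abs_le_iff)
qed

section \<open>Approximation by trigonometric polynomials\<close>

definition complex_trig_poly :: "real \<Rightarrow> (real \<Rightarrow> complex) \<Rightarrow> bool" where
  "complex_trig_poly T q \<longleftrightarrow> (\<exists>n::nat. \<exists>c::int \<Rightarrow> complex. \<forall>x. q x =
     (\<Sum>k\<in>{-int n..int n}. c k * exp (2 * pi * \<i> * of_int k * of_real x / of_real T)))"

lemma real_trig_poly_of_complex:
  "T > 0 \<Longrightarrow> complex_trig_poly T (\<lambda>x. complex_of_real (p x)) \<Longrightarrow> real_trig_poly p"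
  unfolding complex_trig_poly_def real_trig_poly_def by blast

lemma complex_trig_poly_const: "complex_trig_poly T (\<lambda>x. a)"
  unfolding complex_trig_poly_def by (rule exI[of _ 0], rule exI[of _ "\<lambda>k. a"]) simp

lemma complex_trig_poly_add:
  assumes "complex_trig_poly T p" "complex_trig_poly T q"
  shows "complex_trig_poly T (\<lambda>x. p x + q x)"
proof -
  let ?E = "\<lambda>k x. exp (2 * pi * \<i> * of_int k * of_real x / of_real T)"
  obtain n1 c1 where 1: "\<And>x. p x = (\<Sum>k\<in>{-int n1..int n1}. c1 k * ?E k x)"
    using assms(1) unfolding complex_trig_poly_def by blast
  obtain n2 c2 where 2: "\<And>x. q x = (\<Sum>k\<in>{-int n2..int n2}. c2 k * ?E k x)"
    using assms(2) unfolding complex_trig_poly_def by blast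
  let ?n = "max n1 n2"
  have extend: "(\<Sum>k\<in>{-int ?n..int ?n}. if k \<in> {-int m..int m} then c k * ?E k x else 0) =
      (\<Sum>k\<in>{-int m..int m}. c k * ?E k x)" if "m \<le> ?n" for m c x
    using that by (intro sum.mono_neutral_cong_right) auto
  let ?c = "\<lambda>k. (if k \<in> {-int n1..int n1} then c1 k else 0) + (if k \<in> {-int n2..int n2} then c2 k else 0)"
  show ?thesis
    unfolding complex_trig_poly_def
  proof (intro exI allI)
    fix x
    have "(\<Sum>k\<in>{-int ?n..int ?n}. ?c k * ?E k x) =
        (\<Sum>k\<in>{-int ?n..int ?n}. if k \<in> {-int n1..int n1} then c1 k * ?E k x else 0) +
        (\<Sum>k\<in>{-int ?n..int ?n}. if k \<in> {-int n2..int n2} then c2 k * ?E k x else 0)"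
      by (subst sum.distrib[symmetric], rule sum.cong) (auto simp: distrib_right)
    also have "\<dots> = p x + q x"
      by (simp only: extend max.cobounded1 max.cobounded2 1 2)
    finally show "p x + q x = (\<Sum>k\<in>{-int ?n..int ?n}. ?c k * ?E k x)"
      by simp
  qed
qed

lemma complex_trig_poly_mult:
  assumes "complex_trig_poly T p" "complex_trig_poly T q"
  shows "complex_trig_poly T (\<lambda>x. p x * q x)"
proof -
  let ?E = "\<lambda>k x. exp (2 * pi * \<i> * of_int k * of_real x / of_real T)"
  have E: "?E i x * ?E j x = ?E (i + j) x" for i j x
    by (simp add: exp_add[symmetric] add_divide_distrib distrib_left distrib_right mult.assoc)
  obtain n1 c1 where 1: "\<And>x. p x = (\<Sum>k\<in>{-int n1..int n1}. c1 k * ?E k x)"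
    using assms(1) unfolding complex_trig_poly_def by blast
  obtain n2 c2 where 2: "\<And>x. q x = (\<Sum>k\<in>{-int n2..int n2}. c2 k * ?E k x)"
    using assms(2) unfolding complex_trig_poly_def by blast
  let ?A1 = "{-int n1..int n1}" and ?A2 = "{-int n2..int n2}" and ?A = "{-int (n1 + n2)..int (n1 + n2)}"
  let ?c = "\<lambda>k. \<Sum>i\<in>?A1. \<Sum>j\<in>{j. j \<in> ?A2 \<and> i + j = k}. c1 i * c2 j"
  show ?thesis
    unfolding complex_trig_poly_def
  proof (intro exI allI)
    fix x
    have "(\<Sum>k\<in>?A. ?c k * ?E k x) =
        (\<Sum>i\<in>?A1. \<Sum>k\<in>?A. \<Sum>j\<in>{j. j \<in> ?A2 \<and> i + j = k}. c1 i * c2 j * ?E (i + j) x)"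
      by (subst sum.swap) (auto simp: sum_distrib_right intro!: sum.cong)
    also have "\<dots> = (\<Sum>i\<in>?A1. \<Sum>j\<in>?A2. c1 i * c2 j * ?E (i + j) x)"
      by (intro sum.cong refl sum.group) auto
    also have "\<dots> = p x * q x"
      unfolding 1 2 sum_product by (intro sum.cong refl) (subst E[symmetric], simp only: mult_ac)
    finally show "p x * q x = (\<Sum>k\<in>?A. ?c k * ?E k x)"
      by simp
  qed
qed

lemma complex_trig_poly_linear:
  fixes l :: "complex \<Rightarrow> real"
  assumes "bounded_linear l"
  shows "complex_trig_poly T (\<lambda>x. complex_of_real (l (cis (2 * pi * x / T))))"
proof -
  interpret bounded_linear l by fact
  have l: "l z = Re z * l 1 + Im z * l \<i>" for z
  proof -
    have "z = Re z *\<^sub>R 1 + Im z *\<^sub>R \<i>"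
      by (simp add: complex_eq_iff)
    then have "l z = l (Re z *\<^sub>R 1 + Im z *\<^sub>R \<i>)"
      by simp
    then show ?thesis
      by (simp add: add scaleR)
  qed
  let ?c = "\<lambda>k::int. if k = 1 then (complex_of_real (l 1) - \<i> * complex_of_real (l \<i>)) / 2
     else if k = -1 then (complex_of_real (l 1) + \<i> * complex_of_real (l \<i>)) / 2 else 0"
  have E: "exp (2 * pi * \<i> * of_int k * of_real x / of_real T) = cis (real_of_int k * (2 * pi * x / T))" for k x
    by (simp add: cis_conv_exp mult_ac)
  have "complex_of_real (l (cis (2 * pi * x / T))) =
     (\<Sum>k\<in>{- int 1..int 1}. ?c k * exp (2 * pi * \<i> * of_int k * of_real x / of_real T))" for x
  proof -
    define t where "t = 2 * pi * x / T"
    have "{- int 1..int 1} = {-1, 0, 1}"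
      by auto
    then have "(\<Sum>k\<in>{- int 1..int 1}. ?c k * exp (2 * pi * \<i> * of_int k * of_real x / of_real T)) =
        ?c (-1) * cis (- t) + ?c 1 * cis t"
      unfolding E t_def by simp
    also have "\<dots> = complex_of_real (cos t * l 1 + sin t * l \<i>)"
      by (simp add: complex_eq_iff cis.ctr algebra_simps add_divide_distrib[symmetric])
    finally show ?thesis
      unfolding l[of "cis (2 * pi * x / T)"] t_def by simp
  qed
  then show ?thesis
    unfolding complex_trig_poly_def by (intro exI[of _ 1] exI[of _ ?c] allI)
qed

lemma complex_trig_poly_real_polynomial_function:
  fixes g :: "complex \<Rightarrow> real"
  assumes "real_polynomial_function g"
  shows "complex_trig_poly T (\<lambda>x. complex_of_real (g (cis (2 * pi * x / T))))"
  using assms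
proof (induction g rule: real_polynomial_function.induct)
  case (linear f)
  then show ?case by (rule complex_trig_poly_linear)
next
  case (const c)
  then show ?case using complex_trig_poly_const by simp
next
  case (add f g)
  then show ?case using complex_trig_poly_add[OF add.IH] by simp
next
  case (mult f g)
  then show ?case using complex_trig_poly_mult[OF mult.IH] by simp
qed

lemma real_trig_poly_approx_on_circle:
  fixes \<Psi> :: "complex \<Rightarrow> real"
  assumes "continuous_on (sphere 0 1) \<Psi>" "e > 0" "s > 0"
  obtains p where "real_trig_poly p" "continuous_on UNIV p" "\<And>y. \<bar>p y - \<Psi> (cis (s * y))\<bar> < e"
proof -
  obtain g where g: "polynomial_function g" "\<And>z. z \<in> sphere 0 1 \<Longrightarrow> norm (\<Psi> z - g z) < e"
    using Stone_Weierstrass_polynomial_function[OF compact_sphere assms(1,2)] by blast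
  define T where "T = 2 * pi / s"
  have T: "T > 0" "\<And>y. 2 * pi * y / T = s * y"
    using assms(3) by (simp_all add: T_def)
  have "real_trig_poly (\<lambda>y. g (cis (s * y)))"
    using complex_trig_poly_real_polynomial_function[of g T] g(1) T
    by (intro real_trig_poly_of_complex) (simp_all add: real_polynomial_function_eq)
  moreover have "continuous_on UNIV (\<lambda>y. g (cis (s * y)))"
    by (rule continuous_on_compose2[OF continuous_on_polymonial_function[OF g(1)]])
      (auto intro!: continuous_intros)
  moreover have "\<bar>g (cis (s * y)) - \<Psi> (cis (s * y))\<bar> < e" for y
    using g(2)[of "cis (s * y)"] by (simp add: abs_minus_commute)
  ultimately show thesis
    by (rule that)
qed

lemma arcsin_sin_scaled:
  fixes s y :: real
  assumes "s > 0"
  shows "\<bar>arcsin (sin (s * y)) / s\<bar> \<le> pi / (2 * s)"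
    and "\<bar>y\<bar> \<le> pi / (2 * s) \<Longrightarrow> arcsin (sin (s * y)) / s = y"
proof -
  have "\<bar>arcsin (sin (s * y))\<bar> \<le> pi / 2"
    using arcsin_bounded[of "sin (s * y)"] by (auto simp: abs_le_iff)
  then show "\<bar>arcsin (sin (s * y)) / s\<bar> \<le> pi / (2 * s)"
    using assms by (simp add: abs_divide divide_right_mono field_simps)
  assume "\<bar>y\<bar> \<le> pi / (2 * s)"
  then have "\<bar>s * y\<bar> \<le> pi / 2"
    using assms by (simp add: abs_mult field_simps)
  then show "arcsin (sin (s * y)) / s = y"
    using assms by (subst arcsin_sin) (auto simp: abs_le_iff)
qed

lemma cosh_mono_abs: "\<bar>u\<bar> \<le> \<bar>v\<bar> \<Longrightarrow> cosh u \<le> cosh (v::real)"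
  by (metis abs_ge_zero cosh_real_abs cosh_real_nonneg_le_iff)

lemma trig_poly_approx_cosh_bounded:
  fixes f :: "real \<Rightarrow> real" and k :: nat
  assumes f: "continuous_on UNIV f" "\<And>x. \<bar>f x\<bar> \<le> a * cosh (b * x)" and "a \<ge> 0"
  obtains p where "real_trig_poly p" "continuous_on UNIV p"
    "\<And>y. \<bar>y\<bar> \<le> real k \<Longrightarrow> \<bar>f y - p y\<bar> < 1 / (real k + 1)"
    "\<And>y. \<bar>p y\<bar> \<le> a * cosh (b * (\<bar>y\<bar> + 1)) + 1"
proof -
  define s where "s = pi / (2 * (real k + 1))"
  have s: "s > 0" "pi / (2 * s) = real k + 1"
    by (simp_all add: s_def)
  define h where "h z = arcsin (Im z) / s" for z :: complex
  have "Im z \<in> {-1..1}" if "z \<in> sphere 0 1" for z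
    using that abs_Im_le_cmod[of z] by (auto simp: abs_le_iff)
  then have "continuous_on (sphere 0 1) (\<lambda>z. arcsin (Im z))"
    by (intro continuous_on_compose2[OF continuous_on_arcsin']) (auto intro!: continuous_intros)
  then have "continuous_on (sphere 0 1) h"
    unfolding h_def using s(1) by (intro continuous_on_divide continuous_on_const) auto
  then have "continuous_on (sphere 0 1) (\<lambda>z. f (h z))"
    by (rule continuous_on_compose2[OF f(1)]) auto
  then obtain p where p: "real_trig_poly p" "continuous_on UNIV p"
      and p_close: "\<And>y. \<bar>p y - f (h (cis (s * y)))\<bar> < 1 / (real k + 1)"
    using real_trig_poly_approx_on_circle[OF _ _ s(1), of "\<lambda>z. f (h z)" "1 / (real k + 1)"] by auto
  have h_id: "h (cis (s * y)) = y" if "\<bar>y\<bar> \<le> real k + 1" for y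
    using arcsin_sin_scaled(2)[OF s(1), of y] that s(2) by (simp add: h_def)
  have h_le: "\<bar>h (cis (s * y))\<bar> \<le> \<bar>y\<bar> + 1" for y
  proof (cases "\<bar>y\<bar> \<le> real k + 1")
    case True
    then show ?thesis using h_id by simp
  next
    case False
    then show ?thesis
      using arcsin_sin_scaled(1)[OF s(1), of y] s(2) by (simp add: h_def)
  qed
  show thesis
  proof (rule that[OF p])
    fix y :: real assume "\<bar>y\<bar> \<le> real k"
    then show "\<bar>f y - p y\<bar> < 1 / (real k + 1)"
      using p_close[of y] h_id[of y] by (simp add: abs_minus_commute)
  next
    fix y
    have "\<bar>p y\<bar> \<le> \<bar>f (h (cis (s * y)))\<bar> + 1"
      using p_close[of y] divide_le_eq_1[of 1 "real k + 1"] by linarith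
    also have "\<bar>f (h (cis (s * y)))\<bar> \<le> a * cosh (b * h (cis (s * y)))"
      by (rule f(2))
    also have "\<dots> \<le> a * cosh (b * (\<bar>y\<bar> + 1))"
      using h_le[of y] \<open>a \<ge> 0\<close>
      by (intro mult_left_mono cosh_mono_abs) (auto simp: abs_mult mult_left_mono)
    finally show "\<bar>p y\<bar> \<le> a * cosh (b * (\<bar>y\<bar> + 1)) + 1"
      by simp
  qed
qed

lemma approximation_on_growing_intervals:
  fixes p :: "nat \<Rightarrow> real \<Rightarrow> real"
  assumes approx: "\<And>k y. \<bar>y\<bar> \<le> real k \<Longrightarrow> \<bar>f y - p k y\<bar> < 1 / (real k + 1)"
  shows "\<forall>e>0. \<forall>\<^sub>F k in sequentially. \<forall>y\<in>{- real k..real k}. \<bar>f y - p k y\<bar> < e"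
    and "uniform_limit {-r..r} p f sequentially"
proof -
  have ev: "\<forall>\<^sub>F k in sequentially. \<forall>y. \<bar>y\<bar> \<le> real k \<longrightarrow> \<bar>f y - p k y\<bar> < e"
    if "e > 0" for e
  proof -
    obtain K :: nat where K: "1 / e < real K"
      using reals_Archimedean2 by blast
    show ?thesis
      unfolding eventually_sequentially
    proof (intro exI[of _ K] allI impI)
      fix k y assume "k \<ge> K" "\<bar>y\<bar> \<le> real k"
      have "1 / e < real k + 1"
        using K \<open>k \<ge> K\<close> by (smt (verit) of_nat_le_iff)
      then have "1 / (real k + 1) < e"
        using \<open>e > 0\<close> by (simp add: field_simps)
      then show "\<bar>f y - p k y\<bar> < e"
        using approx[OF \<open>\<bar>y\<bar> \<le> real k\<close>] by linarith
    qed
  qed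
  show "\<forall>e>0. \<forall>\<^sub>F k in sequentially. \<forall>y\<in>{- real k..real k}. \<bar>f y - p k y\<bar> < e"
  proof (intro allI impI)
    fix e :: real assume "e > 0"
    from ev[OF this] show "\<forall>\<^sub>F k in sequentially. \<forall>y\<in>{- real k..real k}. \<bar>f y - p k y\<bar> < e"
      by (rule eventually_mono) (simp add: abs_le_iff)
  qed
  show "uniform_limit {-r..r} p f sequentially"
  proof (rule uniform_limitI)
    fix e :: real assume "e > 0"
    have "\<forall>\<^sub>F k in sequentially. r \<le> real k"
      using eventually_ge_at_top[of "nat \<lceil>r\<rceil>"]
      by eventually_elim (meson le_nat_iff real_nat_ceiling_ge order.trans of_nat_mono)
    with ev[OF \<open>e > 0\<close>] show "\<forall>\<^sub>F k in sequentially. \<forall>y\<in>{-r..r}. dist (p k y) (f y) < e"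
    proof eventually_elim
      case (elim k)
      show ?case
      proof
        fix y :: real assume "y \<in> {-r..r}"
        then have "\<bar>y\<bar> \<le> real k"
          using elim(2) by auto
        then show "dist (p k y) (f y) < e"
          using elim(1) by (simp add: dist_real_def abs_minus_commute)
      qed
    qed
  qed
qed

section \<open>Convergence of the compound Poisson measures\<close>

lemma cosh_le_exp_abs: "cosh (t::real) \<le> exp \<bar>t\<bar>"
  by (cases "t \<ge> 0") (auto simp: cosh_def)

lemma summable_poisson_weight_cosh:
  assumes "lam \<ge> 0"
  shows "summable (\<lambda>n. poisson_weight lam n * cosh (\<alpha> * real n + \<beta>))"
proof (rule summable_comparison_test)
  define q where "q = lam * exp \<bar>\<alpha>\<bar>"
  show "summable (\<lambda>n. exp (- lam) * exp \<bar>\<beta>\<bar> * (inverse (fact n) * q ^ n))"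
    by (intro summable_mult summable_exp)
  have "cosh (\<alpha> * real n + \<beta>) \<le> exp \<bar>\<alpha>\<bar> ^ n * exp \<bar>\<beta>\<bar>" for n
  proof -
    have "cosh (\<alpha> * real n + \<beta>) \<le> exp \<bar>\<alpha> * real n + \<beta>\<bar>"
      by (rule cosh_le_exp_abs)
    also have "\<dots> \<le> exp (real n * \<bar>\<alpha>\<bar> + \<bar>\<beta>\<bar>)"
      using abs_triangle_ineq[of "\<alpha> * real n" \<beta>] by (simp add: abs_mult mult.commute)
    finally show ?thesis
      by (simp add: exp_add exp_of_nat_mult)
  qed
  then have "poisson_weight lam n * cosh (\<alpha> * real n + \<beta>) \<le>
      exp (- lam) * exp \<bar>\<beta>\<bar> * (inverse (fact n) * q ^ n)" for n
    using assms mult_left_mono[of _ _ "poisson_weight lam n"]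
    by (fastforce simp: poisson_weight_def q_def power_mult_distrib field_simps)
  then show "\<exists>N. \<forall>n\<ge>N. norm (poisson_weight lam n * cosh (\<alpha> * real n + \<beta>)) \<le>
      exp (- lam) * exp \<bar>\<beta>\<bar> * (inverse (fact n) * q ^ n)"
    using assms by (auto simp: poisson_weight_def intro!: exI[of _ 0])
qed

lemma summable_poisson_weight: "lam \<ge> 0 \<Longrightarrow> summable (poisson_weight lam)"
  using summable_poisson_weight_cosh[of lam 0 0] by simp

lemma linear_growth_scaled_le:
  fixes \<phi> :: "real \<Rightarrow> real"
  assumes "\<And>t. \<bar>\<phi> t\<bar> \<le> A * \<bar>t\<bar> + B" "A \<ge> 0" "\<bar>t\<bar> \<le> c"
  shows "\<bar>\<phi> (t / real (n + 1))\<bar> \<le> A * c + B"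
proof -
  have "\<bar>t / real (n + 1)\<bar> \<le> \<bar>t\<bar>"
    by (simp add: abs_divide divide_le_eq mult_le_cancel_left1)
  then have "A * \<bar>t / real (n + 1)\<bar> \<le> A * c"
    using assms(2,3) by (intro mult_left_mono) auto
  then show ?thesis
    using assms(1)[of "t / real (n + 1)"] by linarith
qed

lemma integral_measure_series_distr_hfun:
  fixes M :: "nat \<Rightarrow> real measure" and u \<phi> :: "real \<Rightarrow> real"
  assumes w: "\<And>n. w n \<ge> 0"
    and M: "\<And>n. prob_space (M n)" "\<And>n. sets (M n) = sets borel" "\<And>n. AE y in M n. y \<in> {-r n..r n}"
    and u: "u \<in> borel_measurable borel" "\<And>n y. y \<in> {-r n..r n} \<Longrightarrow> \<bar>u y\<bar> \<le> C n"
    and \<phi>: "\<phi> \<in> borel_measurable borel" "\<And>t. \<bar>\<phi> t\<bar> \<le> A * \<bar>t\<bar> + B" "A \<ge> 0"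
    and summable: "summable (\<lambda>n. w n * (A * C n + B))"
  shows "integral\<^sup>L (measure_series w (\<lambda>n. distr (M n) borel (hfun u (n + 1)))) \<phi> =
    (\<Sum>n. w n * integral\<^sup>L (M n) (\<lambda>y. \<phi> (u y / real (n + 1))))"
proof -
  have hfun_meas: "hfun u (n + 1) \<in> measurable (M n) borel" for n
  proof -
    have "hfun u (n + 1) \<in> borel_measurable borel"
      using u(1) unfolding hfun_def by measurable
    then show ?thesis
      using measurable_cong_sets[OF M(2) refl] by blast
  qed
  have "integral\<^sup>L (measure_series w (\<lambda>n. distr (M n) borel (hfun u (n + 1)))) \<phi> =
      (\<Sum>n. w n * integral\<^sup>L (distr (M n) borel (hfun u (n + 1))) \<phi>)"
  proof (rule integral_measure_series[OF w _ _ \<phi>(1) _ summable])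
    fix n
    show "prob_space (distr (M n) borel (hfun u (n + 1)))"
      using prob_space.prob_space_distr[OF M(1) hfun_meas] .
    show "sets (distr (M n) borel (hfun u (n + 1))) = sets borel"
      by simp
    have "AE y in M n. \<bar>\<phi> (hfun u (n + 1) y)\<bar> \<le> A * C n + B"
      using M(3)[of n] by (rule eventually_mono) (use u(2) linear_growth_scaled_le[OF \<phi>(2,3)] in \<open>simp add: hfun_def\<close>)
    then show "AE y in distr (M n) borel (hfun u (n + 1)). \<bar>\<phi> y\<bar> \<le> A * C n + B"
      using \<phi>(1) by (subst AE_distr_iff[OF hfun_meas]) (simp_all, measurable)
  qed
  also have "\<dots> = (\<Sum>n. w n * integral\<^sup>L (M n) (\<lambda>y. \<phi> (u y / real (n + 1))))"
    by (subst integral_distr[OF hfun_meas \<phi>(1)]) (simp add: hfun_def)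
  finally show ?thesis .
qed

lemma uniform_limit_integral_measure_series_distr:
  fixes M :: "'x \<Rightarrow> nat \<Rightarrow> real measure" and p :: "nat \<Rightarrow> real \<Rightarrow> real" and f \<phi> :: "real \<Rightarrow> real"
  assumes w: "\<And>n. w n \<ge> 0"
    and M: "\<And>x n. x \<in> X \<Longrightarrow> prob_space (M x n)" "\<And>x n. x \<in> X \<Longrightarrow> sets (M x n) = sets borel"
      "\<And>x n. x \<in> X \<Longrightarrow> AE y in M x n. y \<in> {-r n..r n}"
    and meas: "f \<in> borel_measurable borel" "\<And>k. p k \<in> borel_measurable borel"
    and bound: "\<And>n y. y \<in> {-r n..r n} \<Longrightarrow> \<bar>f y\<bar> \<le> C n"
      "\<And>k n y. y \<in> {-r n..r n} \<Longrightarrow> \<bar>p k y\<bar> \<le> C n"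
    and lim: "\<And>n. uniform_limit {-r n..r n} p f sequentially"
    and \<phi>: "continuous_on UNIV \<phi>" "\<And>t. \<bar>\<phi> t\<bar> \<le> A * \<bar>t\<bar> + B" "A \<ge> 0"
    and summable: "summable (\<lambda>n. w n * (A * C n + B))"
  shows "uniform_limit X
     (\<lambda>k x. integral\<^sup>L (measure_series w (\<lambda>n. distr (M x n) borel (hfun (p k) (n + 1)))) \<phi>)
     (\<lambda>x. integral\<^sup>L (measure_series w (\<lambda>n. distr (M x n) borel (hfun f (n + 1)))) \<phi>) sequentially"
proof -
  have \<phi>_meas [measurable]: "\<phi> \<in> borel_measurable borel"
    using \<phi>(1) by (rule borel_measurable_continuous_onI)
  define \<psi> where "\<psi> n t = \<phi> (t / real (n + 1))" for n t
  have \<psi>_meas: "(\<lambda>y. \<psi> n (u y)) \<in> borel_measurable (M x n)"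
    if "u \<in> borel_measurable borel" "x \<in> X" for u x n
  proof -
    have "(\<lambda>t. \<psi> n t) \<in> borel_measurable borel"
      unfolding \<psi>_def by measurable
    then show ?thesis
      using measurable_compose[OF that(1)] measurable_cong_sets[OF M(2)[OF that(2)] refl] by blast
  qed
  note series = integral_measure_series_distr_hfun[OF w M(1-3) _ _ \<phi>_meas \<phi>(2,3) summable]
  have term_bound: "\<bar>w n * integral\<^sup>L (M x n) (\<lambda>y. \<psi> n (u y))\<bar> \<le> w n * (A * C n + B)"
    if "x \<in> X" "u \<in> borel_measurable borel" "\<And>n y. y \<in> {-r n..r n} \<Longrightarrow> \<bar>u y\<bar> \<le> C n" for x u n
  proof -
    have "AE y in M x n. \<bar>\<psi> n (u y)\<bar> \<le> A * C n + B"
      using M(3)[OF that(1)] by (rule eventually_mono)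
        (use that(3) linear_growth_scaled_le[OF \<phi>(2,3)] in \<open>auto simp: \<psi>_def\<close>)
    then have "\<bar>integral\<^sup>L (M x n) (\<lambda>y. \<psi> n (u y))\<bar> \<le> A * C n + B"
      by (intro prob_space.abs_integral_le_AE[OF M(1)[OF that(1)] \<psi>_meas[OF that(2,1)]])
    then show ?thesis
      using w[of n] by (simp add: abs_mult mult_left_mono)
  qed
  have termwise: "uniform_limit X (\<lambda>k x. w n * integral\<^sup>L (M x n) (\<lambda>y. \<psi> n (p k y)))
      (\<lambda>x. w n * integral\<^sup>L (M x n) (\<lambda>y. \<psi> n (f y))) sequentially" for n
  proof -
    have "continuous_on UNIV (\<psi> n)"
      unfolding \<psi>_def by (intro continuous_on_compose2[OF \<phi>(1)] continuous_intros) auto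
    then have "uniform_limit X (\<lambda>k x. integral\<^sup>L (M x n) (\<lambda>y. \<psi> n (p k y)))
        (\<lambda>x. integral\<^sup>L (M x n) (\<lambda>y. \<psi> n (f y))) sequentially"
      using M meas bound lim by (intro uniform_limit_integral_compose)
    then show ?thesis
      by (rule bounded_linear.uniform_limit[OF bounded_linear_mult_right])
  qed
  have "uniform_limit X (\<lambda>k x. \<Sum>n. w n * integral\<^sup>L (M x n) (\<lambda>y. \<psi> n (p k y)))
      (\<lambda>x. \<Sum>n. w n * integral\<^sup>L (M x n) (\<lambda>y. \<psi> n (f y))) sequentially"
    by (rule uniform_limit_suminf_dominated[OF termwise _ _ summable])
      (use term_bound[OF _ meas(2) bound(2)] term_bound[OF _ meas(1) bound(1)] in auto)
  then show ?thesis
    by (rule uniform_limit_cong'[THEN iffD1, rotated 2])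
      (simp_all only: series[OF _ _ _ meas(2) bound(2)] series[OF _ _ _ meas(1) bound(1)] \<psi>_def)
qed

lemma bounded_if_compact_support:
  fixes g :: "real \<Rightarrow> real"
  assumes "continuous_on UNIV g" "compact (closure {y. g y \<noteq> 0})"
  obtains B where "\<And>t. \<bar>g t\<bar> \<le> B"
proof -
  let ?K = "closure {y. g y \<noteq> 0}"
  have "compact (g ` ?K)"
    by (rule compact_continuous_image[OF continuous_on_subset[OF assms(1) subset_UNIV] assms(2)])
  then have "bounded (g ` ?K)"
    by (rule compact_imp_bounded)
  then obtain B where B: "\<forall>u\<in>g ` ?K. \<bar>u\<bar> \<le> B"
    unfolding bounded_real by blast
  have "\<bar>g t\<bar> \<le> max B 0" for t
  proof (cases "t \<in> ?K")
    case True
    then have "\<bar>g t\<bar> \<le> B"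
      using B by blast
    then show ?thesis by simp
  next
    case False
    then have "g t = 0"
      using closure_subset[of "{y. g y \<noteq> 0}"] by blast
    then show ?thesis by simp
  qed
  then show thesis
    by (rule that)
qed

lemma poisson_cosh_majorant:
  fixes f :: "real \<Rightarrow> real" and p :: "nat \<Rightarrow> real \<Rightarrow> real"
  assumes "lam \<ge> 0" "a \<ge> 0" "R \<ge> 0"
    and f: "\<And>x. \<bar>f x\<bar> \<le> a * cosh (b * x)"
    and p: "\<And>k y. \<bar>p k y\<bar> \<le> a * cosh (b * (\<bar>y\<bar> + 1)) + 1"
  obtains C where "\<And>n y. y \<in> {-((real n + 1) * R)..(real n + 1) * R} \<Longrightarrow> \<bar>f y\<bar> \<le> C n"
    "\<And>k n y. y \<in> {-((real n + 1) * R)..(real n + 1) * R} \<Longrightarrow> \<bar>p k y\<bar> \<le> C n"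
    "summable (\<lambda>n. poisson_weight lam n * (A * C n + B))"
proof -
  define C where "C n = a * cosh (b * ((real n + 1) * R + 1)) + 1" for n
  have cosh_le_C: "a * cosh (b * (\<bar>y\<bar> + 1)) + 1 \<le> C n"
    if "y \<in> {-((real n + 1) * R)..(real n + 1) * R}" for y n
  proof -
    have "\<bar>b * (\<bar>y\<bar> + 1)\<bar> \<le> \<bar>b * ((real n + 1) * R + 1)\<bar>"
      using that \<open>R \<ge> 0\<close> by (auto simp: abs_mult abs_le_iff intro!: mult_left_mono)
    then show ?thesis
      unfolding C_def using \<open>a \<ge> 0\<close> by (simp add: cosh_mono_abs mult_left_mono)
  qed
  have "\<bar>f y\<bar> \<le> C n" if "y \<in> {-((real n + 1) * R)..(real n + 1) * R}" for y n
  proof -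
    have "cosh (b * y) \<le> cosh (b * (\<bar>y\<bar> + 1))"
      by (rule cosh_mono_abs) (simp add: abs_mult mult_left_mono)
    then show ?thesis
      using f[of y] cosh_le_C[OF that] mult_left_mono[OF _ \<open>a \<ge> 0\<close>] by fastforce
  qed
  moreover have "\<bar>p k y\<bar> \<le> C n" if "y \<in> {-((real n + 1) * R)..(real n + 1) * R}" for k y n
    using p[of k y] cosh_le_C[OF that] by linarith
  moreover have "summable (\<lambda>n. A * a * (poisson_weight lam n * cosh (b * R * real n + b * (R + 1))) +
      (A + B) * poisson_weight lam n)"
    using summable_poisson_weight_cosh[OF \<open>lam \<ge> 0\<close>] summable_poisson_weight[OF \<open>lam \<ge> 0\<close>]
    by (intro summable_add summable_mult)
  then have "summable (\<lambda>n. poisson_weight lam n * (A * C n + B))"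
    by (simp add: C_def algebra_simps)
  ultimately show thesis
    by (rule that)
qed

lemma integral_sigma_uniform_limit:
  fixes f \<phi> :: "real \<Rightarrow> real" and p :: "nat \<Rightarrow> real \<Rightarrow> real"
  assumes \<rho>: "compactly_supported_prob \<rho>" and "lam \<ge> 0" "a \<ge> 0"
    and f: "continuous_on UNIV f" "\<And>x. \<bar>f x\<bar> \<le> a * cosh (b * x)"
    and p: "\<And>k. continuous_on UNIV (p k)" "\<And>k y. \<bar>p k y\<bar> \<le> a * cosh (b * (\<bar>y\<bar> + 1)) + 1"
      "\<And>r. uniform_limit {-r..r} p f sequentially"
    and \<phi>: "continuous_on UNIV \<phi>" "\<And>t. \<bar>\<phi> t\<bar> \<le> A * \<bar>t\<bar> + B" "A \<ge> 0"
  shows "uniform_limit (msupp \<rho>) (\<lambda>k x. integral\<^sup>L (sigma_x lam (p k) \<rho> x) \<phi>)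
      (\<lambda>x. integral\<^sup>L (sigma_x lam f \<rho> x) \<phi>) sequentially"
    and "(\<lambda>k. integral\<^sup>L (sigma lam (p k) \<rho>) \<phi>) \<longlonglongrightarrow> integral\<^sup>L (sigma lam f \<rho>) \<phi>"
proof -
  obtain R where R: "R \<ge> 0" "\<And>x. x \<in> msupp \<rho> \<Longrightarrow> \<bar>x\<bar> \<le> R" "AE y in \<rho>. \<bar>y\<bar> \<le> R"
    using compactly_supported_probE[OF \<rho>] by blast
  have \<rho>_prob: "prob_space \<rho>" "sets \<rho> = sets borel"
    using \<rho> by (simp_all add: compactly_supported_prob_def)
  obtain C where C: "\<And>n y. y \<in> {-((real n + 1) * R)..(real n + 1) * R} \<Longrightarrow> \<bar>f y\<bar> \<le> C n"
      "\<And>k n y. y \<in> {-((real n + 1) * R)..(real n + 1) * R} \<Longrightarrow> \<bar>p k y\<bar> \<le> C n"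
      "summable (\<lambda>n. poisson_weight lam n * (A * C n + B))"
    using poisson_cosh_majorant[where p=p and A=A and B=B, OF \<open>lam \<ge> 0\<close> \<open>a \<ge> 0\<close> R(1) f(2) p(2)] by blast
  have meas: "f \<in> borel_measurable borel" "\<And>k. p k \<in> borel_measurable borel" "\<And>n. poisson_weight lam n \<ge> 0"
    using f(1) p(1) \<open>lam \<ge> 0\<close> by (auto simp: poisson_weight_def intro: borel_measurable_continuous_onI)
  show "uniform_limit (msupp \<rho>) (\<lambda>k x. integral\<^sup>L (sigma_x lam (p k) \<rho> x) \<phi>)
      (\<lambda>x. integral\<^sup>L (sigma_x lam f \<rho> x) \<phi>) sequentially"
    unfolding sigma_x_def
    by (rule uniform_limit_integral_measure_series_distr[OF meas(3)
          return_conv_pow_AE_in_Icc[OF \<rho>_prob R(3) R(2)] meas(1,2) C(1,2) p(3) \<phi> C(3)])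
  have M: "prob_space (conv_pow \<rho> (n + 1))" "sets (conv_pow \<rho> (n + 1)) = sets borel"
    "AE y in conv_pow \<rho> (n + 1). y \<in> {-((real n + 1) * R)..(real n + 1) * R}" for n
  proof -
    note M = conv_pow_AE_abs_le[OF \<rho>_prob R(3), of "n + 1"]
    then show "prob_space (conv_pow \<rho> (n + 1))" "sets (conv_pow \<rho> (n + 1)) = sets borel"
      by simp_all
    from M have "AE y in conv_pow \<rho> (n + 1). \<bar>y\<bar> \<le> real (n + 1) * R"
      by blast
    then show "AE y in conv_pow \<rho> (n + 1). y \<in> {-((real n + 1) * R)..(real n + 1) * R}"
      by (rule eventually_mono) (simp add: abs_le_iff add.commute)
  qed
  have "uniform_limit (UNIV :: unit set) (\<lambda>k _. integral\<^sup>L (sigma lam (p k) \<rho>) \<phi>)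
      (\<lambda>_. integral\<^sup>L (sigma lam f \<rho>) \<phi>) sequentially"
    unfolding sigma_def
    by (rule uniform_limit_integral_measure_series_distr[where M="\<lambda>_ n. conv_pow \<rho> (n + 1)",
          OF meas(3) M meas(1,2) C(1,2) p(3) \<phi> C(3)])
  from tendsto_uniform_limitI[OF this UNIV_I]
  show "(\<lambda>k. integral\<^sup>L (sigma lam (p k) \<rho>) \<phi>) \<longlonglongrightarrow> integral\<^sup>L (sigma lam f \<rho>) \<phi>" .
qed

theorem theorem8:
  fixes f :: "real \<Rightarrow> real" and a b lam :: real and \<rho> :: "real measure"
  assumes "continuous_on UNIV f"
    and "a > 0"
    and "\<And>x. \<bar>f x\<bar> \<le> a * cosh (b * x)"
    and "lam > 0"
    and "compactly_supported_prob \<rho>"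
  shows "\<exists>(l :: nat \<Rightarrow> real) (r :: nat \<Rightarrow> real) (p :: nat \<Rightarrow> real \<Rightarrow> real).
     (\<forall>k. l k \<le> r k \<and> real_trig_poly (p k)) \<and>
     (\<forall>e>0. \<forall>\<^sub>F k in sequentially. \<forall>x\<in>{l k..r k}. \<bar>f x - p k x\<bar> < e) \<and>
     (\<forall>x\<in>msupp \<rho>. vague_conv (\<lambda>k. sigma_x lam (p k) \<rho> x) (sigma_x lam f \<rho> x)) \<and>
     vague_conv (\<lambda>k. sigma lam (p k) \<rho>) (sigma lam f \<rho>) \<and>
     uniform_limit (msupp \<rho>)
        (\<lambda>k x. integral\<^sup>L (sigma_x lam (p k) \<rho> x) (\<lambda>y. y))
        (\<lambda>x. integral\<^sup>L (sigma_x lam f \<rho> x) (\<lambda>y. y)) sequentially \<and>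
     (\<lambda>k. integral\<^sup>L (sigma lam (p k) \<rho>) (\<lambda>y. y)) \<longlonglongrightarrow> integral\<^sup>L (sigma lam f \<rho>) (\<lambda>y. y)"
proof -
  have "\<exists>q. real_trig_poly q \<and> continuous_on UNIV q \<and>
      (\<forall>y. \<bar>y\<bar> \<le> real k \<longrightarrow> \<bar>f y - q y\<bar> < 1 / (real k + 1)) \<and>
      (\<forall>y. \<bar>q y\<bar> \<le> a * cosh (b * (\<bar>y\<bar> + 1)) + 1)" for k
    using trig_poly_approx_cosh_bounded[OF assms(1,3), of k] assms(2) by (metis less_imp_le)
  then obtain p where p: "\<And>k. real_trig_poly (p k)" "\<And>k. continuous_on UNIV (p k)"
      "\<And>k y. \<bar>y\<bar> \<le> real k \<Longrightarrow> \<bar>f y - p k y\<bar> < 1 / (real k + 1)"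
      "\<And>k y. \<bar>p k y\<bar> \<le> a * cosh (b * (\<bar>y\<bar> + 1)) + 1"
    by metis
  note approx = approximation_on_growing_intervals[OF p(3)]
  note conv = integral_sigma_uniform_limit[OF assms(5) less_imp_le[OF assms(4)] less_imp_le[OF assms(2)]
      assms(1,3) p(2,4) approx(2)]
  have test_conv: "uniform_limit (msupp \<rho>) (\<lambda>k x. integral\<^sup>L (sigma_x lam (p k) \<rho> x) g)
        (\<lambda>x. integral\<^sup>L (sigma_x lam f \<rho> x) g) sequentially \<and>
      (\<lambda>k. integral\<^sup>L (sigma lam (p k) \<rho>) g) \<longlonglongrightarrow> integral\<^sup>L (sigma lam f \<rho>) g"
    if g: "continuous_on UNIV g \<and> compact (closure {y. g y \<noteq> 0})" for g :: "real \<Rightarrow> real"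
  proof -
    obtain B where "\<And>t. \<bar>g t\<bar> \<le> B"
      using bounded_if_compact_support[of g] g by blast
    then show ?thesis
      using conv[of g 0 B] g by simp
  qed
  have "vague_conv (\<lambda>k. sigma_x lam (p k) \<rho> x) (sigma_x lam f \<rho> x)" if "x \<in> msupp \<rho>" for x
    unfolding vague_conv_def using test_conv tendsto_uniform_limitI[OF _ that] by blast
  moreover have "vague_conv (\<lambda>k. sigma lam (p k) \<rho>) (sigma lam f \<rho>)"
    unfolding vague_conv_def using test_conv by blast
  moreover note conv[of "\<lambda>y. y" 1 0]
  ultimately show ?thesis
    using p(1) approx(1) by (intro exI[of _ "\<lambda>k. - real k"] exI[of _ real] exI[of _ p]) auto
qed

end
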